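(* Let $Q(\mathbf{x})=\mathbf{x}^tM\mathbf{x}$ with $M\in M_d(\mathbb{Z})$ symmetric and $\det M\ne0$. For $g\in\mathrm{SL}_d(\mathbb{Z})$ and $\gamma\in\mathrm{SL}_{d-1}(\mathbb{Q})$, let $\hat g$ be the $d\times(d-1)$ matrix of the first $d-1$ columns of $g$ and $M_{\varphi_g^\gamma}=\gamma^t\hat g^tM^{-1}\hat g\gamma$ (the companion matrix of the form $\mathbf{u}\mapsto Q^*(\hat g\gamma\mathbf{u})$ on $\mathbb{Q}^{d-1}$, where $Q^*(\mathbf{x})=\mathbf{x}^tM^{-1}\mathbf{x}$). Then \[ \det(M_{\varphi_g^\gamma})=\frac{1}{\det M}\,Q(\tau(g)). \]
   Context: $\tau(g)=(g^t)^{-1}\mathbf{e}_d$. *)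

theory Defs
  imports "Jordan_Normal_Form.Gauss_Jordan_Elimination" "Jordan_Normal_Form.Determinant"
begin

definition minv :: "'a :: field mat \<Rightarrow> 'a mat" where
  "minv A = the (mat_inverse A)"

definition int_mat :: "rat mat \<Rightarrow> bool" where
  "int_mat A \<longleftrightarrow> (\<forall>i < dim_row A. \<forall>j < dim_col A. A $$ (i,j) \<in> \<int>)"

definition qform :: "'a :: comm_ring_1 mat \<Rightarrow> 'a vec \<Rightarrow> 'a" where
  "qform M x = x \<bullet> (M *\<^sub>v x)"

(* tau(g) = (g^t)^{-1} e_d, with e_d the last standard basis vector (index d-1, 0-based) *)
definition tau :: "nat \<Rightarrow> rat mat \<Rightarrow> rat vec" where
  "tau d g = minv (transpose_mat g) *\<^sub>v unit_vec d (d - 1)"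

definition ghat :: "nat \<Rightarrow> rat mat \<Rightarrow> rat mat" where
  "ghat d g = mat d (d - 1) (\<lambda>(i,j). g $$ (i,j))"

definition Mphi :: "nat \<Rightarrow> rat mat \<Rightarrow> rat mat \<Rightarrow> rat mat \<Rightarrow> rat mat" where
  "Mphi d M g \<gamma> = transpose_mat \<gamma> * transpose_mat (ghat d g) * minv M * ghat d g * \<gamma>"

end

theory Submission
  imports Defs
begin

text \<open>Put \<open>A = g\<^sup>T M\<^sup>-\<^sup>1 g\<close>. Since \<open>det \<gamma> = 1\<close>, the determinant of
\<open>M\<^sub>\<phi>\<close> is that of \<open>ghat\<^sup>T M\<^sup>-\<^sup>1 ghat\<close>, which is \<open>A\<close> with its last row
and column deleted; so it is a principal minor of \<open>A\<close>, the last diagonal entry of the adjugate \<open>det A \<cdot> A\<^sup>-\<^sup>1\<close>.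
Here \<open>det A = 1 / det M\<close>, and \<open>A\<^sup>-\<^sup>1 = B\<^sup>T M B\<close> with \<open>B = (g\<^sup>T)\<^sup>-\<^sup>1\<close>, whose last
diagonal entry is \<open>Q\<close> evaluated at the last column of \<open>B\<close>, which is \<open>\<tau>(g)\<close>.\<close>

lemma minv:
  fixes A :: "'a :: field mat"
  assumes A: "A \<in> carrier_mat n n" and det: "det A \<noteq> 0"
  shows minv_carrier_mat: "minv A \<in> carrier_mat n n"
    and mult_minv: "A * minv A = 1\<^sub>m n"
    and minv_mult: "minv A * A = 1\<^sub>m n"
proof -
  obtain B where B: "mat_inverse A = Some B"
    using mat_inverse(1)[OF A] det_non_zero_imp_unit[OF A det] by fastforce
  with mat_inverse(2)[OF A B]
  show "minv A \<in> carrier_mat n n" "A * minv A = 1\<^sub>m n" "minv A * A = 1\<^sub>m n"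
    unfolding minv_def by auto
qed

lemma minv_eqI:
  fixes A :: "'a :: field mat"
  assumes A: "A \<in> carrier_mat n n" and X: "X \<in> carrier_mat n n" and AX: "A * X = 1\<^sub>m n"
  shows "minv A = X"
proof -
  have "det A * det X = 1"
    using det_mult[OF A X] AX by simp
  then have det: "det A \<noteq> 0"
    by auto
  have "minv A = minv A * (A * X)"
    using AX minv_carrier_mat[OF A det] by simp
  also have "\<dots> = (minv A * A) * X"
    using minv_carrier_mat[OF A det] A X by (simp add: assoc_mult_mat)
  also have "\<dots> = X"
    using minv_mult[OF A det] X by simp
  finally show ?thesis .
qed

lemma det_minv:
  fixes A :: "'a :: field mat"
  assumes A: "A \<in> carrier_mat n n" and det: "det A \<noteq> 0"
  shows "det (minv A) = 1 / det A"
  using det_mult[OF minv_carrier_mat[OF A det] A] minv_mult[OF A det] det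
  by (simp add: field_simps)

lemma adj_mat_eq_det_smult_minv:
  fixes A :: "'a :: field mat"
  assumes A: "A \<in> carrier_mat n n" and det: "det A \<noteq> 0"
  shows "adj_mat A = det A \<cdot>\<^sub>m minv A"
proof -
  note adj = adj_mat[OF A] and inv = minv_carrier_mat[OF A det]
  have "adj_mat A = adj_mat A * (A * minv A)"
    using mult_minv[OF A det] adj by simp
  also have "\<dots> = (adj_mat A * A) * minv A"
    by (rule assoc_mult_mat[symmetric, OF adj(1) A inv])
  also have "\<dots> = det A \<cdot>\<^sub>m minv A"
    using adj inv by (simp add: mult_smult_assoc_mat[OF one_carrier_mat inv])
  finally show ?thesis .
qed

lemma det_congruence:
  fixes C P :: "'a :: comm_ring_1 mat"
  assumes C: "C \<in> carrier_mat n n" and P: "P \<in> carrier_mat n n"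
  shows "det (transpose_mat P * C * P) = (det P)\<^sup>2 * det C"
  using C P by (simp add: det_mult[of _ n] det_transpose power2_eq_square)

lemma index_congruence:
  fixes N X Y :: "'a :: comm_ring_1 mat"
  assumes N: "N \<in> carrier_mat n n" and X: "X \<in> carrier_mat n m" and Y: "Y \<in> carrier_mat n p"
    and i: "i < m" and j: "j < p"
  shows "(transpose_mat X * N * Y) $$ (i, j) = col X i \<bullet> (N *\<^sub>v col Y j)"
proof -
  have "transpose_mat X * N * Y = transpose_mat X * (N * Y)"
    using N X Y by (simp add: assoc_mult_mat[of _ m n _ n _ p])
  then show ?thesis
    using N X Y i j by simp
qed

lemma congruence_diag_eq_qform:
  fixes M B :: "'a :: comm_ring_1 mat"
  assumes "M \<in> carrier_mat n n" and "B \<in> carrier_mat n m" and "k < m"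
  shows "(transpose_mat B * M * B) $$ (k, k) = qform M (col B k)"
  using index_congruence[OF assms(1,2,2,3,3)] by (simp add: qform_def)

lemma mult_mat_vec_unit_vec:
  fixes A :: "'a :: comm_ring_1 mat"
  assumes "A \<in> carrier_mat n m" and "k < m"
  shows "A *\<^sub>v unit_vec m k = col A k"
  using col_mult2[OF assms(1) one_carrier_mat assms(2)] assms by simp

lemma minv_congruence:
  fixes M g :: "'a :: field mat"
  assumes M: "M \<in> carrier_mat n n" "det M \<noteq> 0" and g: "g \<in> carrier_mat n n" "det g \<noteq> 0"
  shows "minv (transpose_mat g * minv M * g)
    = transpose_mat (minv (transpose_mat g)) * M * minv (transpose_mat g)"
proof -
  define B where "B = minv (transpose_mat g)"
  have gt: "transpose_mat g \<in> carrier_mat n n" "det (transpose_mat g) \<noteq> 0"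
    using g by (auto simp: det_transpose)
  have B: "B \<in> carrier_mat n n" "transpose_mat g * B = 1\<^sub>m n"
    using minv_carrier_mat[OF gt] mult_minv[OF gt] unfolding B_def by auto
  have "transpose_mat (B * transpose_mat g) = 1\<^sub>m n"
    using minv_mult[OF gt] unfolding B_def by simp
  then have gB: "g * transpose_mat B = 1\<^sub>m n"
    using B g by (simp add: transpose_mult)
  note N = minv_carrier_mat[OF M] minv_mult[OF M]
  have "transpose_mat g * minv M * g * (transpose_mat B * M * B)
      = transpose_mat g * minv M * (g * transpose_mat B) * M * B"
    using B g M N by (simp add: assoc_mult_mat[of _ n n _ n _ n])
  also have "\<dots> = transpose_mat g * (minv M * M) * B"
    using B g M N by (simp add: gB assoc_mult_mat[of _ n n _ n _ n])
  also have "\<dots> = 1\<^sub>m n"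
    using B g N by simp
  finally have "minv (transpose_mat g * minv M * g) = transpose_mat B * M * B"
    by (intro minv_eqI) (use B g M N in \<open>auto simp: assoc_mult_mat[of _ n n _ n _ n]\<close>)
  then show ?thesis
    unfolding B_def .
qed

lemma ghat_congruence_eq_mat_delete:
  assumes d: "d \<ge> 1" and g: "g \<in> carrier_mat d d" and N: "N \<in> carrier_mat d d"
  shows "transpose_mat (ghat d g) * N * ghat d g
    = mat_delete (transpose_mat g * N * g) (d - 1) (d - 1)"
proof (rule eq_matI)
  have G: "ghat d g \<in> carrier_mat d (d - 1)"
    unfolding ghat_def by simp
  fix i j
  assume "i < dim_row (mat_delete (transpose_mat g * N * g) (d - 1) (d - 1))"
    and "j < dim_col (mat_delete (transpose_mat g * N * g) (d - 1) (d - 1))"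
  then have ij: "i < d - 1" "j < d - 1"
    using g by auto
  have "col (ghat d g) l = col g l" if "l < d - 1" for l
    using g that by (intro eq_vecI) (auto simp: ghat_def)
  then show "(transpose_mat (ghat d g) * N * ghat d g) $$ (i, j)
      = mat_delete (transpose_mat g * N * g) (d - 1) (d - 1) $$ (i, j)"
    using index_congruence[OF N G G ij] index_congruence[OF N g g, of i j] ij g
    by (simp add: mat_delete_def)
qed (use g ghat_def in auto)

theorem lemma6p2:
  fixes d :: nat and M g \<gamma> :: "rat mat"
  assumes "d \<ge> 1"
    and "M \<in> carrier_mat d d" and "int_mat M" and "transpose_mat M = M" and "det M \<noteq> 0"
    and "g \<in> carrier_mat d d" and "int_mat g" and "det g = 1"
    and "\<gamma> \<in> carrier_mat (d - 1) (d - 1)" and "det \<gamma> = 1"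
  shows "det (Mphi d M g \<gamma>) = qform M (tau d g) / det M"
proof -
  note d = assms(1) and M = assms(2,5) and g = assms(6,8) and \<gamma> = assms(9,10)
  define N where "N = minv M"
  define A where "A = transpose_mat g * N * g"
  define B where "B = minv (transpose_mat g)"
  have N: "N \<in> carrier_mat d d"
    unfolding N_def using minv_carrier_mat[OF M] .
  have G: "ghat d g \<in> carrier_mat d (d - 1)"
    unfolding ghat_def by simp
  have A: "A \<in> carrier_mat d d" "det A = 1 / det M"
    unfolding A_def using g M N det_congruence[OF N g(1)] by (auto simp: N_def det_minv)
  have B: "B \<in> carrier_mat d d"
    unfolding B_def using g by (simp add: minv_carrier_mat det_transpose)
  have "Mphi d M g \<gamma> = transpose_mat \<gamma> * mat_delete A (d - 1) (d - 1) * \<gamma>"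
    unfolding Mphi_def N_def[symmetric] A_def ghat_congruence_eq_mat_delete[OF d g(1) N, symmetric]
    using G N \<gamma> by (simp add: assoc_mult_mat[of _ "d - 1" "d - 1" _ d _ "d - 1"]
        assoc_mult_mat[of _ "d - 1" d _ d _ "d - 1"])
  then have "det (Mphi d M g \<gamma>) = det (mat_delete A (d - 1) (d - 1))"
    using det_congruence[OF mat_delete_carrier[OF A(1)] \<gamma>(1)] \<gamma>(2) by simp
  also have "\<dots> = adj_mat A $$ (d - 1, d - 1)"
    using A d by (simp add: adj_mat_def cofactor_def)
  also have "\<dots> = det A * (transpose_mat B * M * B) $$ (d - 1, d - 1)"
    using A B M g d unfolding A_def N_def B_def
    by (simp add: adj_mat_eq_det_smult_minv minv_congruence)
  also have "\<dots> = qform M (tau d g) / det M"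
    using A(2) congruence_diag_eq_qform[OF M(1) B] mult_mat_vec_unit_vec[OF B] d
    by (simp add: tau_def B_def[symmetric])
  finally show ?thesis .
qed

end
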